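(* Let $\mathbf{A}\in\mathbb{R}^{m\times n}$ have rows $\mathbf{a}_1^\mathsf{T},\dots,\mathbf{a}_m^\mathsf{T}$ and let $\lambda>\max_{l}\|\mathbf{a}_l\|_\infty$. Consider $$\text{(P)}\quad \min_{\boldsymbol{x}\in\{-1,1\}^n}\ \max_{l\in\{1,\dots,m\}}\mathbf{a}_l^\mathsf{T}\boldsymbol{x},\qquad \text{(P}_\lambda\text{)}\quad \min_{\boldsymbol{x}\in[-1,1]^n}\ \max_{l\in\{1,\dots,m\}}\mathbf{a}_l^\mathsf{T}\boldsymbol{x}-\lambda\|\boldsymbol{x}\|_1.$$ Then every optimal solution of (P) is an optimal solution of (P$_\lambda$), and every optimal solution of (P$_\lambda$) is an optimal solution of (P). *)

theory Defs
  imports "HOL-Analysis.Analysis"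
begin

definition maxrow :: "real^'n^'m \<Rightarrow> real^'n \<Rightarrow> real" where
  "maxrow A x = (MAX l\<in>UNIV. (A $ l) \<bullet> x)"

definition linf_norm :: "real^'n \<Rightarrow> real" where
  "linf_norm v = (MAX i\<in>UNIV. \<bar>v $ i\<bar>)"

definition l1_norm :: "real^'n \<Rightarrow> real" where
  "l1_norm x = (\<Sum>i\<in>UNIV. \<bar>x $ i\<bar>)"

definition sign_vectors :: "(real^'n) set" where
  "sign_vectors = {x. \<forall>i. x $ i \<in> {-1, 1}}"

definition box_vectors :: "(real^'n) set" where
  "box_vectors = {x. \<forall>i. -1 \<le> x $ i \<and> x $ i \<le> 1}"

definition is_minimizer :: "'a set \<Rightarrow> ('a \<Rightarrow> real) \<Rightarrow> 'a \<Rightarrow> bool" where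
  "is_minimizer S f x \<longleftrightarrow> x \<in> S \<and> (\<forall>y\<in>S. f x \<le> f y)"

end

theory Submission
  imports Defs
begin

text \<open>Round a point x of the box coordinatewise to a sign vector. Coordinate i moves by
  1 - |x i|, which is exactly the increase of the 1-norm, while each row product a \<bullet> x moves by
  at most linf_norm a times that amount. Since lam exceeds every linf_norm (A $ l), rounding never
  increases the penalised objective and strictly decreases it unless x is already a sign vector.
  On sign vectors the penalty is the constant lam * CARD('n), so both problems have the same
  minimisers.\<close>

definition sign_round :: "real^'n \<Rightarrow> real^'n" where
  "sign_round x = (\<chi> i. if x $ i \<ge> 0 then 1 else -1)"

lemma inner_le_maxrow: "(A $ l) \<bullet> x \<le> maxrow A x"
  unfolding maxrow_def by (rule Max_ge) auto

lemma maxrow_attained: obtains l where "maxrow A x = (A $ l) \<bullet> x"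
proof -
  have "maxrow A x \<in> (\<lambda>l. (A $ l) \<bullet> x) ` UNIV"
    unfolding maxrow_def by (rule Max_in) auto
  then show ?thesis using that by blast
qed

lemma abs_le_linf_norm: "\<bar>v $ i\<bar> \<le> linf_norm v"
  unfolding linf_norm_def by (rule Max_ge) auto

lemma sign_vectors_iff_abs: "x \<in> sign_vectors \<longleftrightarrow> (\<forall>i. \<bar>x $ i\<bar> = 1)"
proof -
  have "r \<in> {-1, 1} \<longleftrightarrow> \<bar>r\<bar> = 1" for r :: real by auto
  then show ?thesis unfolding sign_vectors_def by simp
qed

lemma sign_vectors_subset_box_vectors: "sign_vectors \<subseteq> box_vectors"
proof
  fix x :: "real^'n"
  assume "x \<in> sign_vectors"
  then have "\<bar>x $ i\<bar> \<le> 1" for i by (simp add: sign_vectors_iff_abs)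
  then show "x \<in> box_vectors" unfolding box_vectors_def by (simp add: abs_le_iff)
qed

lemma sign_round_in_sign_vectors: "sign_round x \<in> sign_vectors"
  unfolding sign_round_def sign_vectors_def by auto

lemma l1_norm_sign_vector:
  fixes z :: "real^'n"
  assumes "z \<in> sign_vectors"
  shows "l1_norm z = real CARD('n)"
  using assms unfolding sign_vectors_iff_abs l1_norm_def by simp

lemma abs_sign_round_diff:
  assumes "x \<in> box_vectors"
  shows "\<bar>sign_round x $ i - x $ i\<bar> = 1 - \<bar>x $ i\<bar>"
  using assms unfolding sign_round_def box_vectors_def by (cases "x $ i \<ge> 0") auto

lemma l1_norm_sign_round_gap:
  fixes x :: "real^'n"
  shows "l1_norm (sign_round x) - l1_norm x = (\<Sum>i\<in>UNIV. 1 - \<bar>x $ i\<bar>)"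
  using l1_norm_sign_vector[OF sign_round_in_sign_vectors, of x]
  by (simp add: l1_norm_def sum_subtractf)

lemma l1_norm_sign_round_ge:
  assumes "x \<in> box_vectors"
  shows "l1_norm x \<le> l1_norm (sign_round x)"
proof -
  have "\<And>i. \<bar>x $ i\<bar> \<le> 1" using assms unfolding box_vectors_def by (simp add: abs_le_iff)
  then have "0 \<le> (\<Sum>i\<in>UNIV. 1 - \<bar>x $ i\<bar>)" by (intro sum_nonneg) auto
  then show ?thesis using l1_norm_sign_round_gap[of x] by simp
qed

lemma l1_norm_sign_round_gt:
  assumes "x \<in> box_vectors" and "x \<notin> sign_vectors"
  shows "l1_norm x < l1_norm (sign_round x)"
proof -
  have box: "\<And>i. \<bar>x $ i\<bar> \<le> 1" using assms(1) unfolding box_vectors_def by (simp add: abs_le_iff)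
  obtain i where "\<bar>x $ i\<bar> \<noteq> 1" using assms(2) unfolding sign_vectors_iff_abs by blast
  with box have "0 < 1 - \<bar>x $ i\<bar>" by (simp add: order_le_neq_trans)
  also have "\<dots> \<le> (\<Sum>j\<in>UNIV. 1 - \<bar>x $ j\<bar>)"
    using box by (intro member_le_sum) auto
  finally show ?thesis using l1_norm_sign_round_gap[of x] by simp
qed

lemma inner_sign_round_le:
  fixes a x :: "real^'n"
  assumes "x \<in> box_vectors"
  shows "a \<bullet> sign_round x \<le> a \<bullet> x + linf_norm a * (l1_norm (sign_round x) - l1_norm x)"
proof -
  have "a \<bullet> sign_round x - a \<bullet> x = (\<Sum>i\<in>UNIV. a $ i * (sign_round x $ i - x $ i))"
    by (simp add: inner_vec_def sum_subtractf right_diff_distrib)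
  also have "\<dots> \<le> (\<Sum>i\<in>UNIV. linf_norm a * (1 - \<bar>x $ i\<bar>))"
  proof (rule sum_mono)
    fix i
    have "a $ i * (sign_round x $ i - x $ i) \<le> \<bar>a $ i\<bar> * \<bar>sign_round x $ i - x $ i\<bar>"
      by (metis abs_ge_self abs_mult)
    also have "\<dots> \<le> linf_norm a * \<bar>sign_round x $ i - x $ i\<bar>"
      by (rule mult_right_mono[OF abs_le_linf_norm]) auto
    finally show "a $ i * (sign_round x $ i - x $ i) \<le> linf_norm a * (1 - \<bar>x $ i\<bar>)"
      using abs_sign_round_diff[OF assms] by simp
  qed
  also have "\<dots> = linf_norm a * (l1_norm (sign_round x) - l1_norm x)"
    by (simp add: l1_norm_sign_round_gap sum_distrib_left)
  finally show ?thesis by simp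
qed

lemma maxrow_sign_round_le:
  fixes A :: "real^'n^'m"
  assumes "\<forall>l. linf_norm (A $ l) \<le> c" and "x \<in> box_vectors"
  shows "maxrow A (sign_round x) \<le> maxrow A x + c * (l1_norm (sign_round x) - l1_norm x)"
proof -
  obtain l where l: "maxrow A (sign_round x) = (A $ l) \<bullet> sign_round x"
    using maxrow_attained by blast
  have "linf_norm (A $ l) * (l1_norm (sign_round x) - l1_norm x)
        \<le> c * (l1_norm (sign_round x) - l1_norm x)"
    using assms l1_norm_sign_round_ge[OF assms(2)] by (intro mult_right_mono) auto
  then show ?thesis
    using inner_sign_round_le[OF assms(2), of "A $ l"] inner_le_maxrow[of A l x] l by linarith
qed

lemma penalised_maxrow_sign_round:
  fixes A :: "real^'n^'m"
  assumes lam: "\<forall>l. linf_norm (A $ l) < lam" and x: "x \<in> box_vectors"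
  shows "maxrow A (sign_round x) - lam * l1_norm (sign_round x) \<le> maxrow A x - lam * l1_norm x"
    and "x \<notin> sign_vectors \<Longrightarrow>
         maxrow A (sign_round x) - lam * l1_norm (sign_round x) < maxrow A x - lam * l1_norm x"
proof -
  define c where "c = (MAX l\<in>UNIV. linf_norm (A $ l))"
  have c_bound: "\<forall>l. linf_norm (A $ l) \<le> c"
    unfolding c_def by (auto intro: Max_ge)
  have "c \<in> (\<lambda>l. linf_norm (A $ l)) ` UNIV"
    unfolding c_def by (rule Max_in) auto
  then have "c < lam" using lam by auto
  define gap where "gap = l1_norm (sign_round x) - l1_norm x"
  have main: "maxrow A (sign_round x) - lam * l1_norm (sign_round x)
              \<le> maxrow A x - lam * l1_norm x - (lam - c) * gap"
    using maxrow_sign_round_le[OF c_bound x] unfolding gap_def by (simp add: algebra_simps)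
  have "0 \<le> (lam - c) * gap"
    using \<open>c < lam\<close> l1_norm_sign_round_ge[OF x] unfolding gap_def by simp
  with main show "maxrow A (sign_round x) - lam * l1_norm (sign_round x) \<le> maxrow A x - lam * l1_norm x"
    by linarith
  assume "x \<notin> sign_vectors"
  then have "0 < (lam - c) * gap"
    using \<open>c < lam\<close> l1_norm_sign_round_gt[OF x] unfolding gap_def by simp
  with main show "maxrow A (sign_round x) - lam * l1_norm (sign_round x) < maxrow A x - lam * l1_norm x"
    by linarith
qed

lemma sign_minimizer_imp_penalised_minimizer:
  fixes A :: "real^'n^'m"
  assumes "\<forall>l. linf_norm (A $ l) < lam" and "is_minimizer sign_vectors (maxrow A) x"
  shows "is_minimizer box_vectors (\<lambda>x. maxrow A x - lam * l1_norm x) x"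
proof -
  have x: "x \<in> sign_vectors" and min: "\<forall>z\<in>sign_vectors. maxrow A x \<le> maxrow A z"
    using assms(2) unfolding is_minimizer_def by auto
  have "maxrow A x - lam * l1_norm x \<le> maxrow A y - lam * l1_norm y" if "y \<in> box_vectors" for y
  proof -
    have "l1_norm x = l1_norm (sign_round y)"
      using l1_norm_sign_vector[OF x] l1_norm_sign_vector[OF sign_round_in_sign_vectors[of y]]
      by simp
    then show ?thesis
      using min sign_round_in_sign_vectors[of y] penalised_maxrow_sign_round(1)[OF assms(1) that]
      by fastforce
  qed
  with x sign_vectors_subset_box_vectors show ?thesis
    unfolding is_minimizer_def by auto
qed

lemma penalised_minimizer_imp_sign_minimizer:
  fixes A :: "real^'n^'m"
  assumes "\<forall>l. linf_norm (A $ l) < lam"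
    and "is_minimizer box_vectors (\<lambda>x. maxrow A x - lam * l1_norm x) x"
  shows "is_minimizer sign_vectors (maxrow A) x"
proof -
  have x: "x \<in> box_vectors"
    and min: "\<forall>y\<in>box_vectors. maxrow A x - lam * l1_norm x \<le> maxrow A y - lam * l1_norm y"
    using assms(2) unfolding is_minimizer_def by auto
  have "x \<in> sign_vectors"
  proof (rule ccontr)
    assume "x \<notin> sign_vectors"
    moreover have "sign_round x \<in> box_vectors"
      using sign_round_in_sign_vectors sign_vectors_subset_box_vectors by blast
    ultimately show False
      using penalised_maxrow_sign_round(2)[OF assms(1) x] min by fastforce
  qed
  moreover have "maxrow A x \<le> maxrow A z" if "z \<in> sign_vectors" for z
    using min sign_vectors_subset_box_vectors that
      l1_norm_sign_vector[OF \<open>x \<in> sign_vectors\<close>] l1_norm_sign_vector[OF that] by fastforce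
  ultimately show ?thesis
    unfolding is_minimizer_def by blast
qed

theorem theorem3:
  fixes A :: "real^'n^'m" and lam :: real
  assumes "\<forall>l. linf_norm (A $ l) < lam"
  shows "(\<forall>x. is_minimizer sign_vectors (maxrow A) x
              \<longrightarrow> is_minimizer box_vectors (\<lambda>x. maxrow A x - lam * l1_norm x) x)
       \<and> (\<forall>x. is_minimizer box_vectors (\<lambda>x. maxrow A x - lam * l1_norm x) x
              \<longrightarrow> is_minimizer sign_vectors (maxrow A) x)"
  using sign_minimizer_imp_penalised_minimizer[OF assms]
    penalised_minimizer_imp_sign_minimizer[OF assms]
  by blast

end
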